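(* Let $b$ be a locally finite graph over a countable set $X$. The following statements are equivalent: (i) $R=\delta_w$ for some weight $w$ compatible to $b$; (ii) $b$ is a block graph.
   Context: A graph over a countable set $X$ is a symmetric map $b:X\times X\to[0,\infty)$ with $b(x,x)=0$ and $\sum_{y}b(x,y)<\infty$ for all $x$; $x\sim y$ means $b(x,y)>0$. It is locally finite if every vertex has finitely many neighbours. A block graph is a graph in which any two vertices are connected by a unique induced path. For $f:X\to\mathbb R$ let $Q(f):=\frac12\sum_{x,y}b(x,y)(f(x)-f(y))^2$; the resistance metric is $R(x,y):=\sup\{(f(y)-f(x))^2\mid Q(f)=1\}$. A weight on $X$ is a symmetric $w:X\times X\to[0,\infty]$ with $w(x,y)=0$ iff $x=y$; it is compatible to $b$ if $w(x,y)=\infty$ whenever $b(x,y)=0$ and $x\ne y$. $\delta_w(x,y):=\inf\{\sum_{i=1}^n w(x_{i-1},x_i)\mid (x_0,\dots,x_n)\text{ distinct elements of }X,\ x_0=x,\ x_n=y\}$. *)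

theory Defs
  imports "HOL-Analysis.Analysis" "HOL-Library.Extended_Nonnegative_Real"
begin

text \<open>The vertex set X is the (countable) type 'a; a graph is b :: 'a => 'a => real.\<close>

definition is_graph :: "('a \<Rightarrow> 'a \<Rightarrow> real) \<Rightarrow> bool" where
  "is_graph b \<longleftrightarrow> (\<forall>x y. b x y = b y x) \<and> (\<forall>x y. 0 \<le> b x y) \<and> (\<forall>x. b x x = 0)
     \<and> (\<forall>x. (\<lambda>y. b x y) summable_on UNIV)"

definition locally_finite :: "('a \<Rightarrow> 'a \<Rightarrow> real) \<Rightarrow> bool" where
  "locally_finite b \<longleftrightarrow> (\<forall>x. finite {y. b x y > 0})"

definition graph_connected :: "('a \<Rightarrow> 'a \<Rightarrow> real) \<Rightarrow> bool" where
  "graph_connected b \<longleftrightarrow> (\<forall>x y. (\<lambda>u v. b u v > 0)\<^sup>*\<^sup>* x y)"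

definition energy :: "('a \<Rightarrow> 'a \<Rightarrow> real) \<Rightarrow> ('a \<Rightarrow> real) \<Rightarrow> ennreal" where
  "energy b f = (1/2) * (\<Sum>\<^sub>\<infinity>p\<in>UNIV. ennreal (b (fst p) (snd p) * (f (fst p) - f (snd p))\<^sup>2))"

definition resistance :: "('a \<Rightarrow> 'a \<Rightarrow> real) \<Rightarrow> 'a \<Rightarrow> 'a \<Rightarrow> ennreal" where
  "resistance b x y = Sup {ennreal ((f y - f x)\<^sup>2) | f. energy b f = 1}"

definition is_weight :: "('a \<Rightarrow> 'a \<Rightarrow> ennreal) \<Rightarrow> bool" where
  "is_weight w \<longleftrightarrow> (\<forall>x y. w x y = w y x) \<and> (\<forall>x y. w x y = 0 \<longleftrightarrow> x = y)"

definition compatible :: "('a \<Rightarrow> 'a \<Rightarrow> ennreal) \<Rightarrow> ('a \<Rightarrow> 'a \<Rightarrow> real) \<Rightarrow> bool" where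
  "compatible w b \<longleftrightarrow> (\<forall>x y. b x y = 0 \<and> x \<noteq> y \<longrightarrow> w x y = \<infinity>)"

definition path_length :: "('a \<Rightarrow> 'a \<Rightarrow> ennreal) \<Rightarrow> 'a list \<Rightarrow> ennreal" where
  "path_length w xs = sum_list (map (\<lambda>(u, v). w u v) (zip xs (tl xs)))"

definition path_metric :: "('a \<Rightarrow> 'a \<Rightarrow> ennreal) \<Rightarrow> 'a \<Rightarrow> 'a \<Rightarrow> ennreal" where
  "path_metric w x y = Inf {path_length w xs | xs. xs \<noteq> [] \<and> distinct xs \<and> hd xs = x \<and> last xs = y}"

definition induced_path :: "('a \<Rightarrow> 'a \<Rightarrow> real) \<Rightarrow> 'a list \<Rightarrow> 'a \<Rightarrow> 'a \<Rightarrow> bool" where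
  "induced_path b xs x y \<longleftrightarrow> xs \<noteq> [] \<and> distinct xs \<and> hd xs = x \<and> last xs = y \<and>
     (\<forall>i j. i < length xs \<and> j < length xs \<longrightarrow>
        (b (xs ! i) (xs ! j) > 0 \<longleftrightarrow> (i = Suc j \<or> j = Suc i)))"

definition block_graph :: "('a \<Rightarrow> 'a \<Rightarrow> real) \<Rightarrow> bool" where
  "block_graph b \<longleftrightarrow> (\<forall>x y. \<exists>!xs. induced_path b xs x y)"

end

theory Submission
  imports Defs
begin

(*
  For x \<noteq> z, a compactness argument yields a unit potential \<psi> (\<psi> x = 1, \<psi> z = 0) of
  minimal energy Q, and R(x,z) = 1/Q; every function g satisfies
  (g x - g y)\<^sup>2 \<le> R(x,y) * energy(g).  Truncating \<psi> at the level \<psi> y splits it into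
  potentials for (x,y) and (y,z) whose energies add up to at most Q, and Cauchy-Schwarz
  gives R(x,z) \<le> R(x,y) + R(y,z).  The inequality is strict unless y separates x from z:
  a walk from x to z avoiding y crosses the level \<psi> y at a vertex where the truncated
  potential is a strict local minimum, hence not energy-minimising.  If y does separate
  x from z, gluing the potentials of (x,y) and (y,z) at y shows R(x,z) = R(x,y) + R(y,z).

  (ii) \<Longrightarrow> (i): in a block graph every inner vertex of the unique induced path from x to y
  separates x from y, so R is additive along that path; with w = R on edges and \<infinity>
  elsewhere, the triangle inequality gives \<delta>_w = R.
  (i) \<Longrightarrow> (ii): if R = \<delta>_w and x, y are distinct and non-adjacent, every path from x to y
  starts with an edge x t, so some neighbour t of x satisfies R(x,y) = R(x,t) + R(t,y) and
  therefore separates x from y; every induced path from x to y then begins with x, t, and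
  uniqueness follows by induction on the length.
*)

lemma infsum_cmult_right_ennreal:
  "(\<Sum>\<^sub>\<infinity>x\<in>A. (c::ennreal) * f x) = c * (\<Sum>\<^sub>\<infinity>x\<in>A. f x)"
proof -
  have "(\<Sum>\<^sub>\<infinity>x\<in>A. c * f x) = (SUP F\<in>{F. finite F \<and> F \<subseteq> A}. c * sum f F)"
    by (subst nonneg_infsum_complete) (simp_all add: sum_distrib_left)
  also have "\<dots> = c * (\<Sum>\<^sub>\<infinity>x\<in>A. f x)"
    by (simp add: SUP_mult_left_ennreal nonneg_infsum_complete)
  finally show ?thesis .
qed

lemma infsum_add_ennreal:
  "(\<Sum>\<^sub>\<infinity>x\<in>A. (f x :: ennreal) + g x) = (\<Sum>\<^sub>\<infinity>x\<in>A. f x) + (\<Sum>\<^sub>\<infinity>x\<in>A. g x)"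
  by (rule infsum_add) (auto intro: nonneg_summable_on_complete)

lemma infsum_mono_ennreal:
  "(\<And>x. x \<in> A \<Longrightarrow> (f x :: ennreal) \<le> g x) \<Longrightarrow> (\<Sum>\<^sub>\<infinity>x\<in>A. f x) \<le> (\<Sum>\<^sub>\<infinity>x\<in>A. g x)"
  by (rule infsum_mono) (auto intro: nonneg_summable_on_complete)

lemma infsum_ennreal_split:
  assumes "finite F"
  shows "(\<Sum>\<^sub>\<infinity>x. (f x :: ennreal)) = sum f F + (\<Sum>\<^sub>\<infinity>x\<in>-F. f x)"
proof -
  have "(\<Sum>\<^sub>\<infinity>x\<in>F \<union> -F. f x) = sum f F + (\<Sum>\<^sub>\<infinity>x\<in>-F. f x)"
    using assms by (subst infsum_Un_disjoint) (auto intro: nonneg_summable_on_complete)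
  then show ?thesis by simp
qed

lemma rtranclp_crossing_step:
  assumes "R\<^sup>*\<^sup>* a c" "P a" "\<not> P c"
  shows "\<exists>u v. R u v \<and> P u \<and> \<not> P v"
  using assms by (induction rule: rtranclp_induct) auto

lemma max_min_sq_le:
  fixes a c t :: real
  shows "(max a t - max c t)\<^sup>2 + (min a t - min c t)\<^sup>2 \<le> (a - c)\<^sup>2"
proof -
  have sq: "(a - c)\<^sup>2 = (a - t)\<^sup>2 + (t - c)\<^sup>2 + 2 * ((a - t) * (t - c))"
    by (simp add: power2_eq_square algebra_simps)
  consider "a \<le> t" "c \<le> t" | "t \<le> a" "t \<le> c" | "a \<le> t" "t \<le> c" | "t \<le> a" "c \<le> t"
    by linarith
  then show ?thesis
  proof cases
    case 3
    then have "0 \<le> (a - t) * (t - c)" by (intro mult_nonpos_nonpos) auto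
    with 3 show ?thesis by (simp add: sq max_def min_def)
  next
    case 4
    then have "0 \<le> (a - t) * (t - c)" by (intro mult_nonneg_nonneg) auto
    with 4 show ?thesis by (simp add: sq max_def min_def)
  qed (simp_all add: max_def min_def)
qed

lemma sq_add_le_mult_add:
  fixes a c A B C D :: real
  assumes "a\<^sup>2 \<le> A * B" "c\<^sup>2 \<le> C * D" "0 \<le> A" "0 \<le> B" "0 \<le> C" "0 \<le> D"
  shows "(a + c)\<^sup>2 \<le> (A + C) * (B + D)"
proof -
  have a: "\<bar>a\<bar> \<le> sqrt A * sqrt B"
    using real_sqrt_le_mono[OF assms(1)] by (simp add: real_sqrt_mult)
  have c: "\<bar>c\<bar> \<le> sqrt C * sqrt D"
    using real_sqrt_le_mono[OF assms(2)] by (simp add: real_sqrt_mult)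
  have "(a + c)\<^sup>2 \<le> (\<bar>a\<bar> + \<bar>c\<bar>)\<^sup>2"
    by (metis abs_ge_zero abs_triangle_ineq power2_abs power_mono)
  also have "\<dots> \<le> (sqrt A * sqrt B + sqrt C * sqrt D)\<^sup>2"
    using a c by (intro power_mono add_mono) auto
  also have "\<dots> \<le> (A + C) * (B + D)"
  proof -
    have "0 \<le> (sqrt A * sqrt D - sqrt C * sqrt B)\<^sup>2" by simp
    then show ?thesis
      using assms(3-6) by (simp add: power2_eq_square algebra_simps real_sqrt_mult[symmetric])
  qed
  finally show ?thesis .
qed

lemma rtranclp_if_successively:
  "successively R (x # xs) \<Longrightarrow> R\<^sup>*\<^sup>* x (last (x # xs))"
  by (induction xs arbitrary: x) (auto intro: converse_rtranclp_into_rtranclp)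

lemma minimizing_sequence_ennreal:
  fixes E :: "'b \<Rightarrow> ennreal"
  assumes "(INF f\<in>F. E f) < \<infinity>"
  obtains fs where "\<And>n. fs n \<in> F" "\<And>n. E (fs n) \<le> (INF f\<in>F. E f) + 1"
    and "(\<lambda>n. E (fs n)) \<longlonglongrightarrow> (INF f\<in>F. E f)"
proof -
  define m where "m = (INF f\<in>F. E f)"
  have "m < \<infinity>"
    using assms by (simp add: m_def)
  have "\<exists>f\<in>F. E f < m + ennreal (1 / Suc n)" for n
  proof -
    have "m + 0 < m + ennreal (1 / Suc n)"
      using \<open>m < \<infinity>\<close> by (subst ennreal_add_left_cancel_less) auto
    then show ?thesis
      unfolding m_def by (simp add: INF_less_iff)
  qed
  then obtain fs where fsF: "\<And>n. fs n \<in> F" and fs_less: "\<And>n. E (fs n) < m + ennreal (1 / Suc n)"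
    by metis
  have lower: "m \<le> E (fs n)" for n
    unfolding m_def using fsF by (rule INF_lower)
  have upper: "E (fs n) \<le> m + ennreal (1 / Suc n)" for n
    using fs_less[of n] by (rule less_imp_le)
  have "(\<lambda>n. ennreal (1 / Suc n)) \<longlonglongrightarrow> ennreal 0"
    using LIMSEQ_inverse_real_of_nat by (intro tendsto_ennrealI) (simp add: inverse_eq_divide)
  then have "(\<lambda>n. m + ennreal (1 / Suc n)) \<longlonglongrightarrow> m + 0"
    by (intro tendsto_add tendsto_const) simp
  then have upper_lim: "(\<lambda>n. m + ennreal (1 / Suc n)) \<longlonglongrightarrow> m"
    by simp
  have lim: "(\<lambda>n. E (fs n)) \<longlonglongrightarrow> m"
    using lower upper
    by (intro tendsto_sandwich[OF _ _ tendsto_const upper_lim]) (simp_all add: always_eventually)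
  have bound: "E (fs n) \<le> m + 1" for n
  proof -
    have "m + ennreal (1 / Suc n) \<le> m + 1"
      by (intro add_left_mono) (simp add: ennreal_le_1)
    with upper[of n] show ?thesis
      by (rule order.trans)
  qed
  from fsF bound lim show ?thesis
    unfolding m_def by (rule that)
qed

lemma bounded_pointwise_convergent_subseq:
  fixes fs :: "nat \<Rightarrow> 'a::countable \<Rightarrow> real"
  assumes "\<And>n v. \<bar>fs n v\<bar> \<le> B v"
  obtains l and r :: "nat \<Rightarrow> nat" where "strict_mono r" "\<And>v. (\<lambda>k. fs (r k) v) \<longlonglongrightarrow> l v"
proof -
  define K where "K = Pi\<^sub>E UNIV (\<lambda>v. {- B v .. B v})"
  have "fs n \<in> K" for n
    using assms by (auto simp: K_def PiE_UNIV_domain abs_le_iff minus_le_iff)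
  moreover have "compactin (product_topology (\<lambda>_. euclidean) UNIV) K"
    unfolding K_def by (simp add: compactin_PiE)
  then have "seq_compact K"
    by (simp add: euclidean_product_topology compact_imp_seq_compact)
  ultimately obtain l r where "strict_mono r" "(fs \<circ> r) \<longlonglongrightarrow> l"
    by (metis seq_compactE)
  moreover have "(\<lambda>k. fs (r k) v) \<longlonglongrightarrow> l v" for v
    using continuous_on_tendsto_compose[OF continuous_on_product_coordinates \<open>(fs \<circ> r) \<longlonglongrightarrow> l\<close>]
    by (simp add: o_def)
  ultimately show ?thesis using that by blast
qed

definition induced_edge :: "('a \<Rightarrow> 'a \<Rightarrow> real) \<Rightarrow> 'a set \<Rightarrow> 'a \<Rightarrow> 'a \<Rightarrow> bool" where
  "induced_edge b S u v \<longleftrightarrow> 0 < b u v \<and> u \<in> S \<and> v \<in> S"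

definition separates :: "('a \<Rightarrow> 'a \<Rightarrow> real) \<Rightarrow> 'a \<Rightarrow> 'a \<Rightarrow> 'a \<Rightarrow> bool" where
  "separates b t x y \<longleftrightarrow> \<not> (induced_edge b (-{t}))\<^sup>*\<^sup>* x y"

lemma induced_edge_walk_in:
  assumes "(induced_edge b S)\<^sup>*\<^sup>* x y" "x \<in> S"
  shows "y \<in> S"
  using assms by (induction rule: rtranclp_induct) (auto simp: induced_edge_def)

lemma induced_edge_exit:
  assumes "(induced_edge b (-{y}))\<^sup>*\<^sup>* x u" "\<not> (induced_edge b (-{y}))\<^sup>*\<^sup>* x v" "0 < b u v" "x \<noteq> y"
  shows "v = y"
proof (rule ccontr)
  assume "v \<noteq> y"
  moreover have "u \<noteq> y"
    using induced_edge_walk_in[OF assms(1)] assms(4) by blast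
  ultimately have "induced_edge b (-{y}) u v"
    using assms(3) by (simp add: induced_edge_def)
  then show False
    using assms(1,2) by (meson rtranclp.rtrancl_into_rtrancl)
qed

section \<open>Dirichlet energy\<close>

locale weighted_graph =
  fixes b :: "'a \<Rightarrow> 'a \<Rightarrow> real"
  assumes is_graph: "is_graph b"
begin

lemma b_sym: "b x y = b y x"
  using is_graph by (simp add: is_graph_def)

lemma b_nonneg: "0 \<le> b x y"
  using is_graph by (simp add: is_graph_def)

lemma b_self [simp]: "b x x = 0"
  using is_graph by (simp add: is_graph_def)

lemma b_eq_0_if_not_pos: "\<not> 0 < b x y \<Longrightarrow> b x y = 0"
  using b_nonneg[of x y] by linarith

definition edge_energy :: "('a \<Rightarrow> real) \<Rightarrow> 'a \<times> 'a \<Rightarrow> real" where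
  "edge_energy f p = b (fst p) (snd p) * (f (fst p) - f (snd p))\<^sup>2"

lemma edge_energy_nonneg: "0 \<le> edge_energy f p"
  by (simp add: edge_energy_def b_nonneg)

lemma energy_eq_infsum: "energy b f = 1/2 * (\<Sum>\<^sub>\<infinity>p. ennreal (edge_energy f p))"
  by (simp add: energy_def edge_energy_def)

lemma energy_eq_SUP:
  "energy b f = (SUP G\<in>{G. finite G}. ennreal (sum (edge_energy f) G / 2))"
proof -
  have "ennreal (sum (edge_energy f) G / 2) = 1/2 * (\<Sum>p\<in>G. ennreal (edge_energy f p))" for G
    by (simp add: sum_ennreal edge_energy_nonneg sum_nonneg ennreal_divide_numeral
        ennreal_divide_times)
  then show ?thesis
    by (simp add: energy_eq_infsum nonneg_infsum_complete SUP_mult_left_ennreal)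
qed

lemma energy_shift: "energy b (\<lambda>v. f v + c) = energy b f"
  by (simp add: energy_def)

lemma energy_scale: "energy b (\<lambda>v. c * f v) = ennreal (c\<^sup>2) * energy b f"
proof -
  have "edge_energy (\<lambda>v. c * f v) p = c\<^sup>2 * edge_energy f p" for p
    by (simp add: edge_energy_def power2_eq_square algebra_simps)
  then have "ennreal (edge_energy (\<lambda>v. c * f v) p) = ennreal (c\<^sup>2) * ennreal (edge_energy f p)" for p
    by (simp add: ennreal_mult edge_energy_nonneg)
  then show ?thesis
    by (simp add: energy_eq_infsum infsum_cmult_right_ennreal mult.left_commute)
qed

lemma energy_scale_shift_unit:
  assumes "energy b f = ennreal Q" "0 \<le> Q" "r * Q = 1"
  shows "energy b (\<lambda>v. r * (f v + c)) = ennreal r"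
proof -
  have "r\<^sup>2 * Q = r"
    using assms(3) by (simp add: power2_eq_square mult.assoc)
  then show ?thesis
    using energy_scale[of r "\<lambda>v. f v + c"] energy_shift[of f c] assms(1,2)
    by (simp flip: ennreal_mult)
qed

lemma edge_le_energy: "ennreal (b u v * (f u - f v)\<^sup>2) \<le> energy b f"
proof (cases "u = v")
  case False
  have "sum (edge_energy f) {(u, v), (v, u)} / 2 = b u v * (f u - f v)\<^sup>2"
    using False by (simp add: edge_energy_def b_sym[of v u] power2_commute)
  then show ?thesis
    unfolding energy_eq_SUP by (metis (mono_tags) SUP_upper finite.emptyI finite.insertI mem_Collect_eq)
qed simp

lemma energy_add_le:
  assumes "\<And>p. edge_energy f p + edge_energy g p \<le> edge_energy h p"
  shows "energy b f + energy b g \<le> energy b h"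
proof -
  have "(\<Sum>\<^sub>\<infinity>p. ennreal (edge_energy f p)) + (\<Sum>\<^sub>\<infinity>p. ennreal (edge_energy g p))
      \<le> (\<Sum>\<^sub>\<infinity>p. ennreal (edge_energy h p))"
    unfolding infsum_add_ennreal[symmetric] using assms
    by (intro infsum_mono_ennreal) (simp add: edge_energy_nonneg flip: ennreal_plus)
  then show ?thesis
    unfolding energy_eq_infsum distrib_left[symmetric] by (rule mult_left_mono) simp
qed

lemma energy_le_add:
  assumes "\<And>p. edge_energy h p \<le> edge_energy f p + edge_energy g p"
  shows "energy b h \<le> energy b f + energy b g"
proof -
  have "(\<Sum>\<^sub>\<infinity>p. ennreal (edge_energy h p))
      \<le> (\<Sum>\<^sub>\<infinity>p. ennreal (edge_energy f p)) + (\<Sum>\<^sub>\<infinity>p. ennreal (edge_energy g p))"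
    unfolding infsum_add_ennreal[symmetric] using assms
    by (intro infsum_mono_ennreal) (simp add: edge_energy_nonneg flip: ennreal_plus)
  then show ?thesis
    unfolding energy_eq_infsum distrib_left[symmetric] by (rule mult_left_mono) simp
qed

lemma energy_truncation_le:
  "energy b (\<lambda>v. max (f v) t) + energy b (\<lambda>v. min (f v) t) \<le> energy b f"
proof (rule energy_add_le)
  fix p
  have "b (fst p) (snd p) * ((max (f (fst p)) t - max (f (snd p)) t)\<^sup>2
          + (min (f (fst p)) t - min (f (snd p)) t)\<^sup>2)
        \<le> b (fst p) (snd p) * (f (fst p) - f (snd p))\<^sup>2"
    by (intro mult_left_mono max_min_sq_le b_nonneg)
  then show "edge_energy (\<lambda>v. max (f v) t) p + edge_energy (\<lambda>v. min (f v) t) p \<le> edge_energy f p"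
    by (simp add: edge_energy_def distrib_left)
qed

lemma energy_truncation_split:
  assumes "energy b f = ennreal Q" "0 \<le> Q"
  obtains Q\<^sub>1 Q\<^sub>2 where "energy b (\<lambda>v. max (f v) t) = ennreal Q\<^sub>1" "0 \<le> Q\<^sub>1"
    "energy b (\<lambda>v. min (f v) t) = ennreal Q\<^sub>2" "0 \<le> Q\<^sub>2" "Q\<^sub>1 + Q\<^sub>2 \<le> Q"
proof -
  have sum: "energy b (\<lambda>v. max (f v) t) + energy b (\<lambda>v. min (f v) t) \<le> ennreal Q"
    using energy_truncation_le[of f t] assms(1) by simp
  then obtain Q\<^sub>1 Q\<^sub>2 where "energy b (\<lambda>v. max (f v) t) = ennreal Q\<^sub>1" "0 \<le> Q\<^sub>1"
    "energy b (\<lambda>v. min (f v) t) = ennreal Q\<^sub>2" "0 \<le> Q\<^sub>2"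
    by (cases "energy b (\<lambda>v. max (f v) t)"; cases "energy b (\<lambda>v. min (f v) t)")
      (auto simp: top_unique)
  moreover have "Q\<^sub>1 + Q\<^sub>2 \<le> Q"
    using sum calculation assms(2) by (simp add: ennreal_plus[symmetric] del: ennreal_plus)
  ultimately show ?thesis
    using that by blast
qed

lemma energy_paste_le:
  assumes exit: "\<And>u v. u \<in> A \<Longrightarrow> v \<notin> A \<Longrightarrow> 0 < b u v \<Longrightarrow> v = y"
    and "y \<notin> A" "f y = g y"
  shows "energy b (\<lambda>v. if v \<in> A then f v else g v) \<le> energy b f + energy b g"
proof (rule energy_le_add)
  fix p :: "'a \<times> 'a"
  obtain u v where p: "p = (u, v)" by fastforce
  let ?h = "\<lambda>v. if v \<in> A then f v else g v"
  have "edge_energy ?h p = edge_energy f p \<or> edge_energy ?h p = edge_energy g p"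
  proof (cases "(u \<in> A \<longleftrightarrow> v \<in> A) \<or> b u v = 0")
    case False
    then have "0 < b u v" using b_eq_0_if_not_pos by blast
    then have "(u \<in> A \<and> v = y) \<or> (v \<in> A \<and> u = y)"
      using False exit b_sym[of u v] by metis
    then show ?thesis using assms(2,3) by (auto simp: edge_energy_def p)
  qed (auto simp: edge_energy_def p)
  then show "edge_energy ?h p \<le> edge_energy f p + edge_energy g p"
    using edge_energy_nonneg[of f p] edge_energy_nonneg[of g p] by linarith
qed

lemma energy_finite_if_finite_support:
  assumes "finite S" "\<And>p. p \<notin> S \<Longrightarrow> edge_energy f p = 0"
  shows "energy b f < \<infinity>"
proof -
  have "(\<Sum>\<^sub>\<infinity>p\<in>-S. ennreal (edge_energy f p)) = 0"
    by (rule infsum_0) (simp add: assms(2))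
  then have "(\<Sum>\<^sub>\<infinity>p. ennreal (edge_energy f p)) = (\<Sum>p\<in>S. ennreal (edge_energy f p))"
    using infsum_ennreal_split[OF assms(1)] by simp
  then show ?thesis
    by (simp add: energy_eq_infsum ennreal_mult_eq_top_iff ennreal_divide_eq_top_iff
        sum_ennreal edge_energy_nonneg flip: less_top)
qed

lemma energy_less_if_local_decrease:
  assumes "finite P" and same: "\<And>p. p \<notin> P \<Longrightarrow> edge_energy g p = edge_energy f p"
    and fin: "energy b f < \<infinity>" and less: "sum (edge_energy g) P < sum (edge_energy f) P"
  shows "energy b g < energy b f"
proof -
  define T where "T = (\<Sum>\<^sub>\<infinity>p\<in>-P. ennreal (edge_energy f p))"
  have split: "(\<Sum>\<^sub>\<infinity>p. ennreal (edge_energy h p))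
      = (\<Sum>\<^sub>\<infinity>p\<in>-P. ennreal (edge_energy h p)) + ennreal (sum (edge_energy h) P)" for h
    using infsum_ennreal_split[OF \<open>finite P\<close>] by (simp add: edge_energy_nonneg add.commute)
  have "(\<Sum>\<^sub>\<infinity>p\<in>-P. ennreal (edge_energy g p)) = T"
    unfolding T_def by (rule infsum_cong) (simp add: same)
  then have g: "energy b g = 1/2 * (T + ennreal (sum (edge_energy g) P))"
    and f: "energy b f = 1/2 * (T + ennreal (sum (edge_energy f) P))"
    by (simp_all add: energy_eq_infsum split T_def)
  have "T < \<infinity>"
    using fin by (auto simp: f ennreal_mult_less_top top_unique)
  moreover have "ennreal (sum (edge_energy g) P) < ennreal (sum (edge_energy f) P)"
    using less by (intro ennreal_lessI) (auto intro: le_less_trans sum_nonneg edge_energy_nonneg)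
  ultimately have "T + ennreal (sum (edge_energy g) P) < T + ennreal (sum (edge_energy f) P)"
    by (simp add: ennreal_add_left_cancel_less)
  then show ?thesis
    unfolding f g by (rule ennreal_mult_strict_left_mono)
      (simp_all add: ennreal_divide_eq_top_iff ennreal_zero_less_divide flip: less_top)
qed

lemma energy_le_if_pointwise_limit:
  assumes lim: "\<And>v. (\<lambda>k. fs k v) \<longlonglongrightarrow> f v" and energy_lim: "(\<lambda>k. energy b (fs k)) \<longlonglongrightarrow> L"
  shows "energy b f \<le> L"
  unfolding energy_eq_SUP
proof (rule SUP_least)
  fix G :: "('a \<times> 'a) set" assume "G \<in> {G. finite G}"
  have "(\<lambda>k. ennreal (sum (edge_energy (fs k)) G / 2)) \<longlonglongrightarrow> ennreal (sum (edge_energy f) G / 2)"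
    unfolding edge_energy_def by (intro tendsto_intros lim) simp
  moreover have "ennreal (sum (edge_energy (fs k)) G / 2) \<le> energy b (fs k)" for k
    unfolding energy_eq_SUP using \<open>G \<in> {G. finite G}\<close> by (rule SUP_upper)
  ultimately show "ennreal (sum (edge_energy f) G / 2) \<le> L"
    using energy_lim by (intro LIMSEQ_le) auto
qed

section \<open>Induced paths\<close>

lemma induced_pathD:
  assumes "induced_path b P x y"
  shows "P \<noteq> []" "distinct P" "hd P = x" "last P = y"
    and "\<And>i j. i < length P \<Longrightarrow> j < length P \<Longrightarrow> 0 < b (P ! i) (P ! j) \<longleftrightarrow> i = Suc j \<or> j = Suc i"
  using assms by (auto simp: induced_path_def)

lemma induced_path_loop:
  assumes "induced_path b P x x"
  shows "P = [x]"
proof -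
  note P = induced_pathD[OF assms]
  have "P ! 0 = P ! (length P - 1)"
    using P(1,3,4) by (simp add: hd_conv_nth last_conv_nth)
  then have "length P = 1"
    using P(1) nth_eq_iff_index_eq[OF P(2), of 0 "length P - 1"] by (cases P) auto
  then show ?thesis
    using P(3) by (cases P) auto
qed

lemma induced_path_edge:
  assumes "induced_path b P x y" "0 < b x y"
  shows "P = [x, y]"
proof -
  note P = induced_pathD[OF assms(1)]
  have "0 < b (P ! 0) (P ! (length P - 1))"
    using P(1,3,4) assms(2) by (simp add: hd_conv_nth last_conv_nth)
  then have "length P = 2"
    using P(1) P(5)[of 0 "length P - 1"] by (cases P) auto
  then obtain u v where "P = [u, v]"
    by (auto simp: length_Suc_conv numeral_2_eq_2)
  then show ?thesis
    using P(3,4) by simp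
qed

lemma induced_path_Cons_Cons:
  assumes "induced_path b (x # u # P) x y"
  shows "induced_path b (u # P) u y" "0 < b x u"
proof -
  note xuP = induced_pathD[OF assms]
  show "0 < b x u"
    using xuP(5)[of 0 1] by simp
  show "induced_path b (u # P) u y"
    unfolding induced_path_def
  proof (intro conjI allI impI)
    fix i j assume "i < length (u # P) \<and> j < length (u # P)"
    then show "0 < b ((u # P) ! i) ((u # P) ! j) \<longleftrightarrow> i = Suc j \<or> j = Suc i"
      using xuP(5)[of "Suc i" "Suc j"] by simp
  qed (use xuP(2,4) in auto)
qed

lemma induced_path_take:
  assumes "induced_path b P x y" "k < length P"
  shows "induced_path b (take (Suc k) P) x (P ! k)"
  unfolding induced_path_def
proof (intro conjI allI impI)
  note P = induced_pathD[OF assms(1)]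
  show "hd (take (Suc k) P) = x"
    using P(1,3) by (cases P) auto
  show "last (take (Suc k) P) = P ! k"
    by (subst last_conv_nth) (use assms(2) P(1) in auto)
  fix i j assume "i < length (take (Suc k) P) \<and> j < length (take (Suc k) P)"
  then show "0 < b (take (Suc k) P ! i) (take (Suc k) P ! j) \<longleftrightarrow> i = Suc j \<or> j = Suc i"
    using P(5)[of i j] assms(2) by simp
qed (use induced_pathD(1,2)[OF assms(1)] in auto)

lemma induced_path_snoc:
  assumes P: "induced_path b P x u" and "y \<notin> set P" "0 < b u y"
    and only_u: "\<And>v. v \<in> set P \<Longrightarrow> 0 < b v y \<Longrightarrow> v = u"
  shows "induced_path b (P @ [y]) x y"
proof -
  note P = induced_pathD[OF P]
  define n where "n = length P"
  have "P ! (n - 1) = u"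
    using P(1,4) by (simp add: last_conv_nth n_def)
  have adj_y: "0 < b (P ! j) y \<longleftrightarrow> j = n - 1" if "j < n" for j
    using only_u[of "P ! j"] that \<open>P ! (n - 1) = u\<close> \<open>0 < b u y\<close> P(1)
      nth_eq_iff_index_eq[OF P(2), of j "n - 1"]
    by (auto simp: n_def)
  show ?thesis
    unfolding induced_path_def
  proof (intro conjI allI impI)
    fix i j assume "i < length (P @ [y]) \<and> j < length (P @ [y])"
    then have "i \<le> n" "j \<le> n" by (auto simp: n_def)
    then show "0 < b ((P @ [y]) ! i) ((P @ [y]) ! j) \<longleftrightarrow> i = Suc j \<or> j = Suc i"
      using P(5)[of i j] adj_y[of i] adj_y[of j] P(1) b_sym[of y]
      by (cases "i = n"; cases "j = n") (auto simp: nth_append n_def)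
  qed (use P(1-3) \<open>y \<notin> set P\<close> in auto)
qed

lemma walk_if_induced_path:
  assumes "induced_path b P x y" "set P \<subseteq> S"
  shows "(induced_edge b S)\<^sup>*\<^sup>* x y"
proof -
  note P = induced_pathD[OF assms(1)]
  obtain Q where Q: "P = x # Q"
    using P(1,3) by (cases P) auto
  have "successively (induced_edge b S) P"
    using P(5) assms(2) by (auto simp: successively_conv_nth induced_edge_def)
  then show ?thesis
    using rtranclp_if_successively[of _ x Q] P(4) Q by simp
qed

lemma induced_path_extend:
  assumes P: "induced_path b P x u" and "0 < b u y"
  shows "\<exists>P'. induced_path b P' x y \<and> set P' \<subseteq> insert y (set P)"
proof (cases "y \<in> set P")
  case True
  then obtain k where "k < length P" "P ! k = y"
    by (auto simp: in_set_conv_nth)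
  then show ?thesis
    using induced_path_take[OF P] by (metis set_take_subset subset_insertI2)
next
  case False
  \<comment> \<open>cut \<open>P\<close> after its first vertex adjacent to \<open>y\<close>\<close>
  define i where "i = (LEAST i. i < length P \<and> 0 < b (P ! i) y)"
  have "length P - 1 < length P \<and> 0 < b (P ! (length P - 1)) y"
    using induced_pathD(1,4)[OF P] assms(2) by (simp add: last_conv_nth)
  then have i: "i < length P" "0 < b (P ! i) y"
    unfolding i_def by (metis (mono_tags, lifting) LeastI)+
  have "induced_path b (take (Suc i) P @ [y]) x y"
  proof (rule induced_path_snoc[OF induced_path_take[OF P i(1)]])
    fix v assume "v \<in> set (take (Suc i) P)" "0 < b v y"
    then obtain j where "j < Suc i" "v = P ! j"
      using i(1) by (auto simp: in_set_conv_nth)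
    then show "v = P ! i"
      using not_less_Least[of j "\<lambda>i. i < length P \<and> 0 < b (P ! i) y"] \<open>0 < b v y\<close> i(1)
      by (cases "j = i") (auto simp: i_def less_Suc_eq)
  qed (use False i(2) in \<open>auto dest: in_set_takeD\<close>)
  moreover have "set (take (Suc i) P @ [y]) \<subseteq> insert y (set P)"
    by (auto dest: in_set_takeD)
  ultimately show ?thesis
    by blast
qed

lemma induced_path_if_walk:
  assumes "(induced_edge b S)\<^sup>*\<^sup>* x y" "x \<in> S"
  shows "\<exists>P. induced_path b P x y \<and> set P \<subseteq> S"
  using assms(1)
proof (induction rule: rtranclp_induct)
  case base
  have "induced_path b [x] x x"
    by (simp add: induced_path_def)
  then show ?case
    using assms(2) by auto
next
  case (step u y)
  then obtain P where "induced_path b P x u" "set P \<subseteq> S"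
    by blast
  with step(2) show ?case
    using induced_path_extend[of P x u y] by (force simp: induced_edge_def)
qed

lemma induced_path_through_separator:
  assumes P: "induced_path b P x y" and "0 < b x t" "separates b t x y"
  shows "\<exists>Q. P = x # t # Q"
proof -
  note P' = induced_pathD[OF P]
  have "t \<in> set P"
    using walk_if_induced_path[OF P, where S = "-{t}"] assms(3) by (auto simp: separates_def)
  then obtain k where k: "k < length P" "P ! k = t"
    by (auto simp: in_set_conv_nth)
  have "P ! 0 = x"
    using P'(1,3) by (simp add: hd_conv_nth)
  then have "k = 1"
    using P'(5)[of 0 k] P'(1) k \<open>0 < b x t\<close> by simp
  then show ?thesis
    using k \<open>P ! 0 = x\<close> by (cases P; cases "tl P") auto
qed

end

section \<open>Effective resistance\<close>

locale resistance_network = weighted_graph b for b :: "'a::countable \<Rightarrow> 'a \<Rightarrow> real" +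
  assumes locally_finite: "locally_finite b" and connected: "graph_connected b"
begin

lemma finite_neighbours: "finite {y. 0 < b x y}"
  using locally_finite by (simp add: locally_finite_def)

lemma walk_exists: "(\<lambda>u v. 0 < b u v)\<^sup>*\<^sup>* x y"
  using connected by (simp add: graph_connected_def)

lemma energy_zero_imp_const:
  assumes "energy b f = 0"
  shows "f u = f v"
proof -
  have edge: "f p = f q" if "0 < b p q" for p q
    using edge_le_energy[of p q f] assms that by (simp add: zero_less_mult_iff)
  show ?thesis
    using walk_exists[of u v] by (induction rule: rtranclp_induct) (auto dest: edge)
qed

lemma energy_pos:
  assumes "energy b f = ennreal q" "f u \<noteq> f v"
  shows "0 < q"
  using assms energy_zero_imp_const[of f u v] by (cases "0 < q") (simp_all add: ennreal_eq_0_iff)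

lemma sq_diff_bounded_by_energy:
  "\<exists>C\<ge>0. \<forall>f M. 0 \<le> M \<longrightarrow> energy b f \<le> ennreal M \<longrightarrow> (f v - f x)\<^sup>2 \<le> C * M"
  using walk_exists[of x v]
proof (induction rule: rtranclp_induct)
  case base
  show ?case by (intro exI[of _ 0]) simp
next
  case (step v w)
  then obtain C where "0 \<le> C"
    and C: "\<And>f M. 0 \<le> M \<Longrightarrow> energy b f \<le> ennreal M \<Longrightarrow> (f v - f x)\<^sup>2 \<le> C * M"
    by blast
  have "(f w - f x)\<^sup>2 \<le> (2 * C + 2 / b v w) * M"
    if "0 \<le> M" "energy b f \<le> ennreal M" for f M
  proof -
    have "ennreal (b v w * (f w - f v)\<^sup>2) \<le> ennreal M"
      using edge_le_energy[of v w f] that(2) by (simp add: power2_commute)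
    then have "(f w - f v)\<^sup>2 \<le> M / b v w"
      using \<open>0 < b v w\<close> that(1) by (simp add: ennreal_le_iff pos_le_divide_eq mult.commute)
    moreover have "(f w - f x)\<^sup>2 \<le> 2 * (f v - f x)\<^sup>2 + 2 * (f w - f v)\<^sup>2"
      using sum_squares_bound[of "f v - f x" "f w - f v"]
      by (simp add: power2_eq_square algebra_simps)
    ultimately have "(f w - f x)\<^sup>2 \<le> 2 * (C * M) + 2 * (M / b v w)"
      using C[OF that] by linarith
    then show ?thesis by (simp add: algebra_simps)
  qed
  then show ?case
    using \<open>0 \<le> C\<close> \<open>0 < b v w\<close> by (intro exI[of _ "2 * C + 2 / b v w"]) auto
qed

lemma energy_indicator_finite: "energy b (\<lambda>v. if v = x then 1 else 0) < \<infinity>"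
proof (rule energy_finite_if_finite_support)
  let ?N = "{y. 0 < b x y}"
  show "finite ({x} \<times> ?N \<union> ?N \<times> {x})"
    using finite_neighbours by auto
  fix p assume "p \<notin> {x} \<times> ?N \<union> ?N \<times> {x}"
  then show "edge_energy (\<lambda>v. if v = x then 1 else 0) p = 0"
    using b_eq_0_if_not_pos b_sym by (cases p) (auto simp: edge_energy_def)
qed

lemma bounded_if_energy_bounded:
  assumes "0 \<le> M"
  obtains B where "\<And>f v. f z = 0 \<Longrightarrow> energy b f \<le> ennreal M \<Longrightarrow> \<bar>f v\<bar> \<le> B v"
proof -
  obtain C where C: "\<And>v f M. 0 \<le> M \<Longrightarrow> energy b f \<le> ennreal M \<Longrightarrow> (f v - f z)\<^sup>2 \<le> C v * M"
    using sq_diff_bounded_by_energy[of _ z] by metis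
  have "\<bar>f v\<bar> \<le> sqrt (C v * M)" if "f z = 0" "energy b f \<le> ennreal M" for f v
  proof -
    have "(f v)\<^sup>2 \<le> C v * M"
      using C[OF assms that(2), of v] that(1) by simp
    then have "sqrt ((f v)\<^sup>2) \<le> sqrt (C v * M)"
      by (rule real_sqrt_le_mono)
    then show ?thesis by simp
  qed
  then show ?thesis
    by (rule that)
qed

lemma energy_minimizer_exists:
  assumes "x \<noteq> z"
  shows "\<exists>\<psi>. \<psi> x = 1 \<and> \<psi> z = 0 \<and> energy b \<psi> < \<infinity> \<and>
           (\<forall>f. f x = 1 \<longrightarrow> f z = 0 \<longrightarrow> energy b \<psi> \<le> energy b f)"
proof -
  define F where "F = {f. f x = 1 \<and> f z = (0::real)}"
  define m where "m = (INF f\<in>F. energy b f)"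
  have "(\<lambda>v. if v = x then 1 else 0) \<in> F"
    using assms by (simp add: F_def)
  then have "m \<le> energy b (\<lambda>v. if v = x then 1 else 0)"
    unfolding m_def by (rule INF_lower)
  then have "m < \<infinity>"
    using energy_indicator_finite[of x] by (rule le_less_trans)
  then obtain M where m: "m = ennreal M" "0 \<le> M"
    by (cases m) auto
  from \<open>m < \<infinity>\<close> obtain fs where fsF: "\<And>n. fs n \<in> F"
    and fs_bound: "\<And>n. energy b (fs n) \<le> m + 1" and energy_lim: "(\<lambda>n. energy b (fs n)) \<longlonglongrightarrow> m"
    unfolding m_def by (rule minimizing_sequence_ennreal) blast
  obtain B where B: "\<And>f v. f z = 0 \<Longrightarrow> energy b f \<le> ennreal (M + 1) \<Longrightarrow> \<bar>f v\<bar> \<le> B v"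
    using bounded_if_energy_bounded[of "M + 1"] m(2) by auto
  have "\<bar>fs n v\<bar> \<le> B v" for n v
    using B[of "fs n" v] fsF[of n] fs_bound[of n] m by (simp add: F_def ennreal_plus)
  then obtain \<psi> r where "strict_mono r" and lim: "\<And>v. (\<lambda>k. fs (r k) v) \<longlonglongrightarrow> \<psi> v"
    using bounded_pointwise_convergent_subseq[of fs B] by blast
  have "energy b \<psi> \<le> m"
    using lim LIMSEQ_subseq_LIMSEQ[OF energy_lim \<open>strict_mono r\<close>]
    by (intro energy_le_if_pointwise_limit) (simp_all add: o_def)
  moreover have "\<psi> x = 1" "\<psi> z = 0"
    using lim[of x] lim[of z] fsF by (simp_all add: F_def LIMSEQ_const_iff)
  moreover have "m \<le> energy b f" if "f x = 1" "f z = 0" for f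
    unfolding m_def using that by (intro INF_lower) (simp add: F_def)
  ultimately show ?thesis
    using \<open>m < \<infinity>\<close> by (metis order.trans le_less_trans)
qed

lemma resistance_ge:
  assumes "energy b g = ennreal q" "0 < q"
  shows "ennreal ((g y - g x)\<^sup>2 / q) \<le> resistance b x y"
proof -
  define h where "h = (\<lambda>v. 1 / sqrt q * g v)"
  have "energy b h = ennreal ((1 / sqrt q)\<^sup>2) * ennreal q"
    unfolding h_def energy_scale assms(1) ..
  also have "\<dots> = 1"
    using assms(2) by (simp add: power_divide flip: ennreal_mult)
  finally have "energy b h = 1" .
  moreover have "(h y - h x)\<^sup>2 = (g y - g x)\<^sup>2 / q"
    using assms(2) by (simp add: h_def power2_eq_square field_simps)
  ultimately show ?thesis
    unfolding resistance_def by (metis (mono_tags, lifting) Sup_upper mem_Collect_eq)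
qed

lemma resistance_of_minimizer:
  assumes "\<psi> x = 1" "\<psi> z = 0" "energy b \<psi> = ennreal Q"
    and min: "\<And>f. f x = 1 \<Longrightarrow> f z = 0 \<Longrightarrow> energy b \<psi> \<le> energy b f"
  shows "0 < Q" "resistance b x z = ennreal (1 / Q)"
proof -
  show "0 < Q"
    using energy_pos[OF assms(3), of x z] assms(1,2) by simp
  then have "ennreal (1 / Q) \<le> resistance b x z"
    using resistance_ge[OF assms(3), of z x] assms(1,2) by simp
  moreover have "resistance b x z \<le> ennreal (1 / Q)"
    unfolding resistance_def
  proof (rule Sup_least, clarify)
    fix f assume f: "energy b f = 1"
    show "ennreal ((f z - f x)\<^sup>2) \<le> ennreal (1 / Q)"
    proof (cases "f x = f z")
      case False
      define c where "c = 1 / (f x - f z)"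
      have "energy b \<psi> \<le> energy b (\<lambda>v. c * (f v + - f z))"
        using False by (intro min) (simp_all add: c_def)
      also have "\<dots> = ennreal (c\<^sup>2)"
        using energy_shift[of f "- f z"] by (simp add: energy_scale f)
      finally have "Q \<le> c\<^sup>2"
        using assms(3) by (simp add: ennreal_le_iff)
      then have "Q * (f z - f x)\<^sup>2 \<le> 1"
        using False by (simp add: c_def power_divide power2_commute field_simps)
      then show ?thesis
        using \<open>0 < Q\<close> by (intro ennreal_leI) (simp add: field_simps)
    qed (simp add: \<open>0 < Q\<close>)
  qed
  ultimately show "resistance b x z = ennreal (1 / Q)"
    by (rule antisym[rotated])
qed

(* The resistance is finite (resistance_eq_res below), so enn2real loses nothing. *)
definition res :: "'a \<Rightarrow> 'a \<Rightarrow> real" where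
  "res x y = enn2real (resistance b x y)"

lemma unit_potential:
  assumes "x \<noteq> z"
  obtains \<psi> Q where "\<psi> x = 1" "\<psi> z = 0" "energy b \<psi> = ennreal Q" "0 < Q" "res x z * Q = 1"
proof -
  obtain \<psi> where \<psi>: "\<psi> x = 1" "\<psi> z = 0" "energy b \<psi> < \<infinity>"
    and min: "\<And>f. f x = 1 \<Longrightarrow> f z = 0 \<Longrightarrow> energy b \<psi> \<le> energy b f"
    using energy_minimizer_exists[OF assms] by blast
  then obtain Q where Q: "energy b \<psi> = ennreal Q"
    by (cases "energy b \<psi>") auto
  have "0 < Q" "resistance b x z = ennreal (1 / Q)"
    using resistance_of_minimizer[OF \<psi>(1,2) Q min] by auto
  then show ?thesis
    using that[OF \<psi>(1,2) Q] by (simp add: res_def)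
qed

lemma resistance_self: "resistance b x x = 0"
proof -
  have "resistance b x x \<le> 0"
    unfolding resistance_def by (rule Sup_least) auto
  then show ?thesis by simp
qed

lemma resistance_eq_res: "resistance b x y = ennreal (res x y)"
proof (cases "x = y")
  case True
  then show ?thesis by (simp add: res_def resistance_self)
next
  case False
  then obtain \<psi> Q where "\<psi> x = 1" "\<psi> y = 0" "energy b \<psi> < \<infinity>"
    "\<And>f. f x = 1 \<Longrightarrow> f y = 0 \<Longrightarrow> energy b \<psi> \<le> energy b f"
    using energy_minimizer_exists by blast
  then show ?thesis
    using resistance_of_minimizer[of \<psi> x y] by (cases "energy b \<psi>") (auto simp: res_def)
qed

lemma res_nonneg: "0 \<le> res x y"
  by (simp add: res_def)

lemma res_sym: "res x y = res y x"
  by (simp add: res_def resistance_def power2_commute)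

lemma res_self [simp]: "res x x = 0"
  by (simp add: res_def resistance_self)

lemma res_pos: "x \<noteq> y \<Longrightarrow> 0 < res x y"
  by (metis unit_potential res_nonneg less_eq_real_def mult_zero_left zero_neq_one)

lemma res_lower_bound:
  assumes "energy b g = ennreal q" "0 \<le> q"
  shows "(g x - g y)\<^sup>2 \<le> res x y * q"
proof (cases "g x = g y")
  case False
  then have "0 < q"
    using energy_pos[OF assms(1)] by blast
  then have "(g x - g y)\<^sup>2 / q \<le> res x y"
    using resistance_ge[OF assms(1) \<open>0 < q\<close>, of y x]
    by (simp add: resistance_eq_res res_nonneg power2_commute)
  then show ?thesis
    using \<open>0 < q\<close> by (simp add: pos_divide_le_eq)
qed (use assms res_nonneg in \<open>simp add: zero_le_mult_iff\<close>)

definition laplacian :: "('a \<Rightarrow> real) \<Rightarrow> 'a \<Rightarrow> real" where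
  "laplacian f v = (\<Sum>w | 0 < b v w. b v w * (f v - f w))"

lemma laplacian_neg_at_strict_local_min:
  assumes "\<And>w. 0 < b v w \<Longrightarrow> f v \<le> f w" "0 < b v u" "f v < f u"
  shows "laplacian f v < 0"
proof -
  let ?N = "{w. 0 < b v w}"
  have "laplacian f v = b v u * (f v - f u) + (\<Sum>w\<in>?N - {u}. b v w * (f v - f w))"
    unfolding laplacian_def using assms(2) finite_neighbours[of v] by (simp add: sum.remove)
  moreover have "b v u * (f v - f u) < 0"
    using assms(2,3) by (simp add: mult_pos_neg)
  moreover have "(\<Sum>w\<in>?N - {u}. b v w * (f v - f w)) \<le> 0"
    using assms(1) by (intro sum_nonpos) (simp add: mult_nonneg_nonpos b_nonneg)
  ultimately show ?thesis by linarith
qed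

definition weighted_degree :: "'a \<Rightarrow> real" where
  "weighted_degree v = (\<Sum>w | 0 < b v w. b v w)"

definition edges_at :: "'a \<Rightarrow> ('a \<times> 'a) set" where
  "edges_at v = Pair v ` {w. 0 < b v w} \<union> (\<lambda>w. (w, v)) ` {w. 0 < b v w}"

lemma edge_energy_bump_outside:
  assumes "p \<notin> edges_at v"
  shows "edge_energy (\<lambda>w. f w + (if w = v then \<epsilon> else 0)) p = edge_energy f p"
proof (cases "fst p = v \<or> snd p = v")
  case True
  then have "b (fst p) (snd p) = 0"
    using assms b_eq_0_if_not_pos b_sym by (cases p) (force simp: edges_at_def)
  then show ?thesis by (simp add: edge_energy_def)
qed (auto simp: edge_energy_def)

lemma sum_edge_energy_bump:
  "sum (edge_energy (\<lambda>w. f w + (if w = v then \<epsilon> else 0))) (edges_at v)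
     = sum (edge_energy f) (edges_at v) + 2 * (2 * \<epsilon> * laplacian f v + \<epsilon>\<^sup>2 * weighted_degree v)"
proof -
  define N where "N = {w. 0 < b v w}"
  have "finite N" "v \<notin> N"
    using finite_neighbours by (simp_all add: N_def)
  have sum_edges: "sum h (edges_at v) = (\<Sum>w\<in>N. h (v, w)) + (\<Sum>w\<in>N. h (w, v))" for h
    unfolding edges_at_def N_def[symmetric] using \<open>finite N\<close> \<open>v \<notin> N\<close>
    by (subst sum.union_disjoint) (auto simp: sum.reindex inj_on_def)
  let ?g = "\<lambda>w. f w + (if w = v then \<epsilon> else 0)"
  have "edge_energy ?g (v, w) = edge_energy f (v, w) + (2 * \<epsilon> * (b v w * (f v - f w)) + \<epsilon>\<^sup>2 * b v w)"
    "edge_energy ?g (w, v) = edge_energy f (w, v) + (2 * \<epsilon> * (b v w * (f v - f w)) + \<epsilon>\<^sup>2 * b v w)"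
    if "w \<in> N" for w
    using that \<open>v \<notin> N\<close> by (auto simp: edge_energy_def b_sym[of w v] power2_eq_square algebra_simps)
  then show ?thesis
    by (simp add: sum_edges sum.distrib laplacian_def weighted_degree_def sum_distrib_left flip: N_def)
qed

lemma energy_decreases_if_laplacian_neg:
  assumes fin: "energy b f < \<infinity>" and neg: "laplacian f v < 0"
  obtains \<epsilon> where "energy b (\<lambda>w. f w + (if w = v then \<epsilon> else 0)) < energy b f"
proof -
  define L where "L = laplacian f v"
  have "{w. 0 < b v w} \<noteq> {}"
  proof
    assume "{w. 0 < b v w} = {}"
    then show False
      using neg by (simp add: laplacian_def)
  qed
  then have "0 < weighted_degree v"
    unfolding weighted_degree_def using finite_neighbours[of v] by (intro sum_pos) auto
  \<comment> \<open>minimises the energy change computed in \<open>sum_edge_energy_bump\<close>\<close>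
  define \<epsilon> where "\<epsilon> = - L / weighted_degree v"
  have "2 * \<epsilon> * L + \<epsilon>\<^sup>2 * weighted_degree v = - (L\<^sup>2 / weighted_degree v)"
    using \<open>0 < weighted_degree v\<close> by (simp add: \<epsilon>_def power2_eq_square field_simps)
  moreover have "0 < L\<^sup>2 / weighted_degree v"
    using neg \<open>0 < weighted_degree v\<close> by (simp add: L_def)
  ultimately have "sum (edge_energy (\<lambda>w. f w + (if w = v then \<epsilon> else 0))) (edges_at v)
      < sum (edge_energy f) (edges_at v)"
    using sum_edge_energy_bump[of f v \<epsilon>] by (simp add: L_def)
  moreover have "finite (edges_at v)"
    using finite_neighbours[of v] by (simp add: edges_at_def)
  ultimately have "energy b (\<lambda>w. f w + (if w = v then \<epsilon> else 0)) < energy b f"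
    by (intro energy_less_if_local_decrease[OF _ edge_energy_bump_outside fin])
  then show ?thesis
    by (rule that)
qed

lemma res_sum_lower_bound:
  assumes "\<phi> x = 1" "\<phi> y = t" "energy b \<phi> = ennreal Q" "0 \<le> Q"
    and "\<eta> y = t" "\<eta> z = 0" "energy b \<eta> = ennreal Q'" "0 \<le> Q'"
  shows "1 \<le> (res x y + res y z) * (Q + Q')"
proof -
  have "(1 - t)\<^sup>2 \<le> res x y * Q"
    using res_lower_bound[OF assms(3,4), of x y] assms(1,2) by simp
  moreover have "t\<^sup>2 \<le> res y z * Q'"
    using res_lower_bound[OF assms(7,8), of y z] assms(5,6) by simp
  ultimately show ?thesis
    using sq_add_le_mult_add[of "1 - t" "res x y" Q t "res y z" Q'] assms(4,8)
    by (simp add: res_nonneg mult.commute)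
qed

lemma energy_decreases_at_level_crossing:
  assumes "energy b (\<lambda>w. max (f w) t) < \<infinity>" "(induced_edge b S)\<^sup>*\<^sup>* x z" "t < f x" "f z \<le> t"
  obtains v \<epsilon> where "v \<in> S" "f v \<le> t"
    "energy b (\<lambda>w. max (f w) t + (if w = v then \<epsilon> else 0)) < energy b (\<lambda>w. max (f w) t)"
proof -
  have "\<exists>u v. induced_edge b S u v \<and> t < f u \<and> \<not> t < f v"
    using assms(3,4) by (intro rtranclp_crossing_step[OF assms(2)]) auto
  then obtain u v where uv: "induced_edge b S u v" "t < f u" "\<not> t < f v"
    by blast
  then have "0 < b v u" "v \<in> S"
    using b_sym[of u v] by (auto simp: induced_edge_def)
  have "laplacian (\<lambda>w. max (f w) t) v < 0"
    using uv(2,3) \<open>0 < b v u\<close> by (intro laplacian_neg_at_strict_local_min) auto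
  then obtain \<epsilon> where
    "energy b (\<lambda>w. max (f w) t + (if w = v then \<epsilon> else 0)) < energy b (\<lambda>w. max (f w) t)"
    using energy_decreases_if_laplacian_neg[OF assms(1)] by blast
  with \<open>v \<in> S\<close> uv(3) show ?thesis
    using that by auto
qed

lemma res_triangle_level:
  assumes \<psi>: "\<psi> x = 1" "\<psi> z = 0" "energy b \<psi> = ennreal Q" "0 < Q" "res x z * Q = 1"
    and t: "0 < \<psi> y" "\<psi> y < 1"
  shows "res x z \<le> res x y + res y z"
    and "\<not> separates b y x z \<Longrightarrow> res x z < res x y + res y z"
proof -
  define t where "t = \<psi> y"
  define S where "S = res x y + res y z"
  obtain Q\<^sub>1 Q\<^sub>2 where Q\<^sub>1: "energy b (\<lambda>v. max (\<psi> v) t) = ennreal Q\<^sub>1" "0 \<le> Q\<^sub>1"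
    and Q\<^sub>2: "energy b (\<lambda>v. min (\<psi> v) t) = ennreal Q\<^sub>2" "0 \<le> Q\<^sub>2" and "Q\<^sub>1 + Q\<^sub>2 \<le> Q"
    using energy_truncation_split[OF \<psi>(3) less_imp_le[OF \<psi>(4)]] by blast
  have lower: "1 \<le> S * (Q' + Q\<^sub>2)"
    if "\<phi> x = 1" "\<phi> y = t" "energy b \<phi> = ennreal Q'" "0 \<le> Q'" for \<phi> Q'
    using res_sum_lower_bound[OF that, of "\<lambda>v. min (\<psi> v) t" z Q\<^sub>2] Q\<^sub>2 \<psi>(2) t
    by (simp add: S_def t_def)
  have "1 \<le> S * (Q\<^sub>1 + Q\<^sub>2)"
    using lower[OF _ _ Q\<^sub>1] \<psi>(1) t by (simp add: t_def)
  also have "\<dots> \<le> S * Q"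
    using \<open>Q\<^sub>1 + Q\<^sub>2 \<le> Q\<close> by (intro mult_left_mono) (simp_all add: S_def res_nonneg)
  finally show "res x z \<le> S"
    using \<psi>(4,5) by (metis mult_le_cancel_right_pos)
  assume "\<not> separates b y x z"
  then obtain v \<epsilon> where "v \<noteq> y" "\<psi> v \<le> t" and less:
    "energy b (\<lambda>w. max (\<psi> w) t + (if w = v then \<epsilon> else 0)) < energy b (\<lambda>w. max (\<psi> w) t)"
    using energy_decreases_at_level_crossing[of \<psi> t "-{y}" x z] Q\<^sub>1(1) \<psi>(1,2) t
    by (auto simp: separates_def t_def)
  define \<phi> where "\<phi> = (\<lambda>w. max (\<psi> w) t + (if w = v then \<epsilon> else 0))"
  obtain Q\<^sub>3 where Q\<^sub>3: "energy b \<phi> = ennreal Q\<^sub>3" "0 \<le> Q\<^sub>3" "Q\<^sub>3 < Q\<^sub>1"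
    using less Q\<^sub>1 unfolding \<phi>_def[symmetric] by (cases "energy b \<phi>") (auto simp: ennreal_less_iff)
  have "x \<noteq> y"
    using \<psi>(1) t by auto
  then have "0 < S"
    using res_pos[of x y] res_nonneg[of y z] by (simp add: S_def)
  have "v \<noteq> x"
    using \<open>\<psi> v \<le> t\<close> \<psi>(1) t by (auto simp: t_def)
  then have "1 \<le> S * (Q\<^sub>3 + Q\<^sub>2)"
    using lower[OF _ _ Q\<^sub>3(1,2)] \<open>v \<noteq> y\<close> \<psi>(1) t by (simp add: \<phi>_def t_def)
  also have "\<dots> < S * Q"
    using \<open>0 < S\<close> Q\<^sub>3(3) \<open>Q\<^sub>1 + Q\<^sub>2 \<le> Q\<close> by (simp add: mult_strict_left_mono)
  finally show "res x z < S"
    using \<psi>(4,5) by (metis mult_less_cancel_right_pos)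
qed

lemma res_triangle_cases:
  assumes "x \<noteq> z"
  obtains "res x z \<le> res x y"
    | "res x z \<le> res y z"
    | "res x z \<le> res x y + res y z" "\<not> separates b y x z \<Longrightarrow> res x z < res x y + res y z"
proof -
  obtain \<psi> Q where \<psi>: "\<psi> x = 1" "\<psi> z = 0" "energy b \<psi> = ennreal Q" "0 < Q" "res x z * Q = 1"
    using unit_potential[OF assms] .
  consider "\<psi> y \<le> 0" | "1 \<le> \<psi> y" | "0 < \<psi> y" "\<psi> y < 1"
    by linarith
  then show ?thesis
  proof cases
    case 1
    then have "1 \<le> (\<psi> x - \<psi> y)\<^sup>2"
      using \<psi>(1) by (simp add: one_le_power)
    also have "\<dots> \<le> res x y * Q"
      using res_lower_bound[OF \<psi>(3)] \<psi>(4) by simp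
    finally show ?thesis
      using that(1) \<psi>(4,5) by (metis mult_le_cancel_right_pos)
  next
    case 2
    then have "1 \<le> (\<psi> y - \<psi> z)\<^sup>2"
      using \<psi>(2) by (simp add: one_le_power)
    also have "\<dots> \<le> res y z * Q"
      using res_lower_bound[OF \<psi>(3)] \<psi>(4) by simp
    finally show ?thesis
      using that(2) \<psi>(4,5) by (metis mult_le_cancel_right_pos)
  next
    case 3
    then show ?thesis
      using that(3) res_triangle_level[OF \<psi>] by blast
  qed
qed

lemma res_triangle: "res x z \<le> res x y + res y z"
  using res_nonneg[of x y] res_nonneg[of y z]
  by (cases "x = z") (auto elim: res_triangle_cases[of x z y])

lemma res_triangle_strict:
  assumes "y \<noteq> x" "y \<noteq> z" "\<not> separates b y x z"
  shows "res x z < res x y + res y z"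
  using res_pos[of x y] res_pos[of y z] res_nonneg[of x y] res_nonneg[of y z] assms
  by (cases "x = z") (auto elim: res_triangle_cases[of x z y])

lemma res_additive_at_cut:
  assumes "x \<noteq> y" "y \<noteq> z" and sep: "separates b y x z"
  shows "res x z = res x y + res y z"
proof -
  obtain \<psi> Q where \<psi>: "\<psi> x = 1" "\<psi> y = 0" "energy b \<psi> = ennreal Q" "0 < Q" "res x y * Q = 1"
    using unit_potential[OF assms(1)] .
  obtain \<phi> Q' where \<phi>: "\<phi> y = 1" "\<phi> z = 0" "energy b \<phi> = ennreal Q'" "0 < Q'" "res y z * Q' = 1"
    using unit_potential[OF assms(2)] .
  define A where "A = {v. (induced_edge b (-{y}))\<^sup>*\<^sup>* x v}"
  have "x \<in> A" "z \<notin> A"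
    using sep by (simp_all add: A_def separates_def)
  have "y \<notin> A"
    using induced_edge_walk_in[of b "-{y}" x y] assms(1) by (auto simp: A_def)
  define S where "S = res x y + res y z"
  define g where "g v = (if v \<in> A then res x y * \<psi> v else res y z * (\<phi> v - 1))" for v
  have "energy b g \<le> energy b (\<lambda>v. res x y * \<psi> v) + energy b (\<lambda>v. res y z * (\<phi> v - 1))"
    unfolding g_def using induced_edge_exit[of b y x] assms(1) \<open>y \<notin> A\<close> \<psi>(2) \<phi>(1)
    by (intro energy_paste_le) (auto simp: A_def)
  also have "\<dots> = ennreal (res x y) + ennreal (res y z)"
    using energy_scale_shift_unit[OF \<psi>(3) _ \<psi>(5), of 0] \<psi>(4)
      energy_scale_shift_unit[OF \<phi>(3) _ \<phi>(5), of "- 1"] \<phi>(4)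
    by simp
  also have "\<dots> = ennreal S"
    by (simp add: S_def res_nonneg)
  finally have "energy b g \<le> ennreal S" .
  moreover have "0 \<le> S"
    by (simp add: S_def res_nonneg)
  ultimately obtain q where q: "energy b g = ennreal q" "0 \<le> q" "q \<le> S"
    by (cases "energy b g") (auto simp: ennreal_le_iff top_unique)
  have "S\<^sup>2 = (g x - g z)\<^sup>2"
    using \<open>x \<in> A\<close> \<open>z \<notin> A\<close> \<psi>(1) \<phi>(2) by (simp add: g_def S_def)
  also have "\<dots> \<le> res x z * q"
    by (rule res_lower_bound[OF q(1,2)])
  also have "\<dots> \<le> res x z * S"
    using q(3) res_nonneg by (rule mult_left_mono)
  finally have "S \<le> res x z"
    using res_pos[OF assms(1)] res_nonneg[of y z] by (simp add: S_def power2_eq_square)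
  then show ?thesis
    using res_triangle[of x z y] by (simp add: S_def)
qed

end

section \<open>Resistance metrics that are path metrics\<close>

lemma path_length_singleton [simp]: "path_length w [x] = 0"
  by (simp add: path_length_def)

lemma path_length_Cons_Cons: "path_length w (x # y # P) = w x y + path_length w (y # P)"
  by (simp add: path_length_def)

lemma path_metric_le_path_length:
  "P \<noteq> [] \<Longrightarrow> distinct P \<Longrightarrow> path_metric w (hd P) (last P) \<le> path_length w P"
  unfolding path_metric_def by (rule Inf_lower) blast

context weighted_graph
begin

lemma path_metric_ge_INF_neighbours:
  assumes "compatible w b" "x \<noteq> y"
  shows "(INF t\<in>{t. 0 < b x t}. path_metric w x t + path_metric w t y) \<le> path_metric w x y"
  unfolding path_metric_def [of w x y]
proof (rule Inf_greatest)
  fix l assume "l \<in> {path_length w P |P. P \<noteq> [] \<and> distinct P \<and> hd P = x \<and> last P = y}"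
  then obtain P where P: "l = path_length w P" "P \<noteq> []" "distinct P" "hd P = x" "last P = y"
    by blast
  obtain t Q where "P = x # t # Q"
    using P(2,4,5) \<open>x \<noteq> y\<close> by (cases P; cases "tl P") auto
  with P(3,5) have "x \<noteq> t" "distinct (t # Q)" "last (t # Q) = y"
    by auto
  show "(INF t\<in>{t. 0 < b x t}. path_metric w x t + path_metric w t y) \<le> l"
  proof (cases "0 < b x t")
    case True
    have "path_metric w x t \<le> w x t"
      using path_metric_le_path_length[of "[x, t]" w] \<open>x \<noteq> t\<close> by (simp add: path_length_Cons_Cons)
    moreover have "path_metric w t y \<le> path_length w (t # Q)"
      using path_metric_le_path_length[of "t # Q" w] \<open>distinct (t # Q)\<close> \<open>last (t # Q) = y\<close> by simp
    ultimately have "path_metric w x t + path_metric w t y \<le> l"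
      unfolding P(1) \<open>P = x # t # Q\<close> path_length_Cons_Cons by (rule add_mono)
    moreover have "(INF t\<in>{t. 0 < b x t}. path_metric w x t + path_metric w t y)
        \<le> path_metric w x t + path_metric w t y"
      using True by (intro INF_lower) simp
    ultimately show ?thesis
      by (rule order.trans[rotated])
  next
    case False
    then have "w x t = \<infinity>"
      using assms(1) b_eq_0_if_not_pos[OF False] \<open>x \<noteq> t\<close> by (simp add: compatible_def)
    then show ?thesis
      by (simp add: P(1) \<open>P = x # t # Q\<close> path_length_Cons_Cons)
  qed
qed

end

context resistance_network
begin

lemma induced_path_exists: "\<exists>P. induced_path b P x y"
proof -
  have "induced_edge b UNIV = (\<lambda>u v. 0 < b u v)"
    by (simp add: induced_edge_def fun_eq_iff)
  then have "(induced_edge b UNIV)\<^sup>*\<^sup>* x y"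
    using walk_exists[of x y] by simp
  then show ?thesis
    using induced_path_if_walk by blast
qed

lemma separating_neighbour:
  assumes "compatible w b" "resistance b = path_metric w" "x \<noteq> y" "\<not> 0 < b x y"
  shows "\<exists>t. 0 < b x t \<and> separates b t x y"
proof (rule ccontr)
  assume "\<not> ?thesis"
  then have no_sep: "\<not> separates b t x y" if "0 < b x t" for t
    using that by blast
  let ?N = "{t. 0 < b x t}"
  have pm: "path_metric w u v = ennreal (res u v)" for u v
    using assms(2) by (simp flip: resistance_eq_res)
  have "(INF t\<in>?N. ennreal (res x t) + ennreal (res t y)) \<le> ennreal (res x y)"
    using path_metric_ge_INF_neighbours[OF assms(1,3)] by (simp add: pm)
  moreover have "ennreal (res x y) < (INF t\<in>?N. ennreal (res x t) + ennreal (res t y))"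
  proof (cases "?N = {}")
    case False
    then obtain t\<^sub>0 where "t\<^sub>0 \<in> ?N" by blast
    have "ennreal (res x y) < ennreal (res x t) + ennreal (res t y)" if "t \<in> ?N" for t
    proof -
      have "res x y < res x t + res t y"
        using that assms(4) no_sep by (intro res_triangle_strict) auto
      then show ?thesis
        by (simp add: ennreal_less_iff res_nonneg flip: ennreal_plus)
    qed
    then show ?thesis
      using finite_neighbours[of x] \<open>t\<^sub>0 \<in> ?N\<close>
      by (intro finite_imp_less_Inf[where x = "ennreal (res x t\<^sub>0) + ennreal (res t\<^sub>0 y)"]) auto
  qed simp
  ultimately show False
    by simp
qed

lemma induced_path_unique_if_resistance_path_metric:
  assumes "compatible w b" "resistance b = path_metric w"
  shows "induced_path b P x y \<Longrightarrow> induced_path b P' x y \<Longrightarrow> P = P'"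
proof (induction "length P" arbitrary: P P' x rule: less_induct)
  case less
  consider "x = y" | "x \<noteq> y" "0 < b x y" | "x \<noteq> y" "\<not> 0 < b x y"
    by blast
  then show ?case
  proof cases
    case 1
    then show ?thesis
      using less.prems induced_path_loop by blast
  next
    case 2
    then show ?thesis
      using less.prems induced_path_edge by blast
  next
    case 3
    then obtain t where t: "0 < b x t" "separates b t x y"
      using separating_neighbour[OF assms] by blast
    obtain Q where P: "P = x # t # Q"
      using induced_path_through_separator[OF less.prems(1) t] by blast
    obtain Q' where P': "P' = x # t # Q'"
      using induced_path_through_separator[OF less.prems(2) t] by blast
    have "length (t # Q) < length P"
      using P by simp
    moreover have "induced_path b (t # Q) t y" "induced_path b (t # Q') t y"
      using induced_path_Cons_Cons(1) less.prems unfolding P P' by simp_all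
    ultimately have "t # Q = t # Q'"
      by (rule less.hyps)
    then show ?thesis
      using P P' by simp
  qed
qed

lemma block_graph_if_resistance_path_metric:
  assumes "compatible w b" "resistance b = path_metric w"
  shows "block_graph b"
  unfolding block_graph_def
  using induced_path_exists induced_path_unique_if_resistance_path_metric[OF assms]
  by (intro allI ex_ex1I)

definition res_weight :: "'a \<Rightarrow> 'a \<Rightarrow> ennreal" where
  "res_weight x y = (if x = y then 0 else if 0 < b x y then ennreal (res x y) else \<infinity>)"

lemma res_weight_is_weight: "is_weight res_weight"
proof -
  have "res_weight x y \<noteq> 0" if "x \<noteq> y" for x y
    using res_pos[OF that] that by (simp add: res_weight_def)
  then show ?thesis
    unfolding is_weight_def by (auto simp: res_weight_def b_sym res_sym)
qed

lemma res_weight_compatible: "compatible res_weight b"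
  by (simp add: compatible_def res_weight_def)

lemma res_le_path_length: "P \<noteq> [] \<Longrightarrow> ennreal (res (hd P) (last P)) \<le> path_length res_weight P"
proof (induction P rule: induct_list012)
  case (3 x y P)
  have "ennreal (res x (last (y # P))) \<le> ennreal (res x y) + ennreal (res y (last (y # P)))"
    using res_triangle res_nonneg by (simp flip: ennreal_plus)
  also have "\<dots> \<le> res_weight x y + path_length res_weight (y # P)"
  proof (rule add_mono)
    show "ennreal (res x y) \<le> res_weight x y"
      by (simp add: res_weight_def)
    show "ennreal (res y (last (y # P))) \<le> path_length res_weight (y # P)"
      using "3.IH"(2) by simp
  qed
  finally show ?case
    by (simp add: path_length_Cons_Cons)
qed simp_all

lemma separates_if_block_graph:
  assumes "block_graph b" "induced_path b (x # u # P) x y" "u \<noteq> y"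
  shows "separates b u x y"
  unfolding separates_def
proof
  assume "(induced_edge b (-{u}))\<^sup>*\<^sup>* x y"
  moreover have "x \<noteq> u"
    using induced_pathD(2)[OF assms(2)] by auto
  ultimately obtain P' where "induced_path b P' x y" "set P' \<subseteq> -{u}"
    using induced_path_if_walk by blast
  moreover have "P' = x # u # P"
    using assms(1,2) \<open>induced_path b P' x y\<close> unfolding block_graph_def by blast
  ultimately show False
    by simp
qed

lemma path_length_induced_path:
  assumes "block_graph b"
  shows "induced_path b P x y \<Longrightarrow> path_length res_weight P = ennreal (res x y)"
proof (induction P arbitrary: x)
  case (Cons x' P)
  note IH = Cons.IH
  note xP = induced_pathD[OF Cons.prems]
  show ?case
  proof (cases P)
    case Nil
    then show ?thesis using xP by simp
  next
    case (Cons u Q)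
    then have path: "induced_path b (x # u # Q) x y"
      using Cons.prems xP(3) by simp
    have "x \<noteq> u"
      using xP(2,3) Cons by auto
    have "path_length res_weight (u # Q) = ennreal (res u y)"
      using IH[of u] induced_path_Cons_Cons(1)[OF path] Cons by simp
    then have "path_length res_weight (x # u # Q) = ennreal (res x u) + ennreal (res u y)"
      using induced_path_Cons_Cons(2)[OF path] \<open>x \<noteq> u\<close>
      by (simp add: path_length_Cons_Cons res_weight_def)
    also have "\<dots> = ennreal (res x y)"
      using res_additive_at_cut[OF \<open>x \<noteq> u\<close> _ separates_if_block_graph[OF assms path]] res_nonneg
      by (cases "u = y") (simp_all flip: ennreal_plus)
    finally show ?thesis
      using Cons xP(3) by simp
  qed
qed (simp add: induced_path_def)

lemma resistance_eq_path_metric_if_block_graph: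
  assumes "block_graph b"
  shows "resistance b = path_metric res_weight"
proof (intro ext antisym)
  fix x y
  obtain P where P: "induced_path b P x y"
    using induced_path_exists by blast
  note P' = induced_pathD[OF P]
  show "path_metric res_weight x y \<le> resistance b x y"
    using path_metric_le_path_length[OF P'(1,2), of res_weight] P'(3,4)
      path_length_induced_path[OF assms P]
    by (simp add: resistance_eq_res)
  show "resistance b x y \<le> path_metric res_weight x y"
    unfolding path_metric_def resistance_eq_res
  proof (rule Inf_greatest)
    fix l assume "l \<in> {path_length res_weight P |P. P \<noteq> [] \<and> distinct P \<and> hd P = x \<and> last P = y}"
    then obtain P where "l = path_length res_weight P" "P \<noteq> []" "hd P = x" "last P = y"
      by blast
    then show "ennreal (res x y) \<le> l"
      using res_le_path_length[of P] by simp
  qed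
qed

end

theorem theorem3p4:
  fixes b :: "'a::countable \<Rightarrow> 'a \<Rightarrow> real"
  assumes "is_graph b" and "locally_finite b" and "graph_connected b"
  shows "(\<exists>w. is_weight w \<and> compatible w b \<and> resistance b = path_metric w) \<longleftrightarrow> block_graph b"
proof -
  interpret resistance_network b
    using assms by unfold_locales
  show ?thesis
  proof
    assume "\<exists>w. is_weight w \<and> compatible w b \<and> resistance b = path_metric w"
    then show "block_graph b"
      using block_graph_if_resistance_path_metric by blast
  next
    assume "block_graph b"
    then show "\<exists>w. is_weight w \<and> compatible w b \<and> resistance b = path_metric w"
      using resistance_eq_path_metric_if_block_graph res_weight_is_weight res_weight_compatible
      by blast
  qed
qed

end
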